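(* In the abstract setting described in the context, let $u\in V\cap H^{k+1}(\Omega)$ be the solution of the forward problem, let $z:=0\in W$ (the exact solution of the adjoint problem with $g=0$), and let $(u_h,z_h)\in V_h\times W_h$ be a solution of the discrete problem. Assume (GO), (C1) and (A1) hold. Then \[ |\pi_V u-u_h|_{S_p}+|\pi_W z-z_h|_{S_a}\lesssim c_{a,\gamma}(1+c_a^2)^{1/2}\,h^k|u|_{H^{k+1}(\Omega)}+\epsilon(h)\|z_h\|. \] If moreover $s_p(u,w+w_h)=0$ for all $w\in W$ and $w_h\in W_h$, then \[ |u_h|_{S_p}+|z_h|_{S_a}\lesssim \big(c_{a,\gamma}+c_{a,\gamma}(1+c_a^2)^{1/2}\big)h^k|u|_{H^{k+1}(\Omega)}+\epsilon(h)\|z_h\|. \]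
   Context: Let $\Omega\subset\mathbb{R}^d$ ($d=2,3$) be a polygonal/polyhedral domain and $\{\mathcal T_h\}_h$ a family of quasi-uniform, shape-regular triangulations of $\Omega$ with mesh size $h=\max_{K}\mathrm{diam}(K)$; $X_h^k$ denotes the continuous piecewise polynomials of degree $\le k$ ($k\ge1$) on $\mathcal T_h$. $(\cdot,\cdot)$, $\|\cdot\|$ are the $L^2(\Omega)$ inner product and norm. Let $V,W\subset H^1(\Omega)$ be subspaces and $a:V\times W\to\mathbb R$ a bilinear form. Forward problem: given $f\in L^2(\Omega)$ find $u\in V$ with $a(u,w)=(f,w)$ for all $w\in W$ (strong form $\mathcal L u=f$); adjoint problem: given $g$ find $z\in W$ with $a(v,z)=(g,v)$ for all $v\in V$ (strong form $\mathcal L^*z=g$). Let $V_h,W_h\subset X_h^k$ be finite element spaces, $a_h$ a bilinear form on $(V+V_h)\times(W+W_h)$, and $s_p$, $s_a$ symmetric positive semi-definite bilinear forms on $V+V_h$ and $W+W_h$ respectively, with semi-norms $|x|_{S_p}=s_p(x,x)^{1/2}$, $|x|_{S_a}=s_a(x,x)^{1/2}$. The discrete problem: find $(u_h,z_h)\in V_h\times W_h$ such that $a_h(u_h,w_h)+s_a(z_h,w_h)=(f,w_h)$ and $a_h(v_h,z_h)-s_p(u_h,v_h)=-s_p(u,v_h)$ for all $(v_h,w_h)\in V_h\times W_h$, where $u$ is the exact forward solution. Assumptions: (GO) $a_h(u-u_h,w_h)=s_a(z_h,w_h)$ for all $w_h\in W_h$ and $a_h(v_h,z-z_h)=s_p(u-u_h,v_h)$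 for all $v_h\in V_h$. There are operators $\pi_V:V\to V_h$, $\pi_W:W\to W_h$, semi-norms $\|\cdot\|_+,\|\cdot\|_*,\|\cdot\|_{\mathcal L}$, constants $c_a,c_{a,\gamma}>0$ independent of $h$, and a function $\epsilon(h)\ge0$ such that: (C1) $a_h(v-\pi_Vv,x_h)\le\|v-\pi_Vv\|_+(c_a|x_h|_{S_a}+\epsilon(h)\|x_h\|)$ for all $v\in V\cap H^2(\Omega)$, $x_h\in W_h$; (A1) $\|v-\pi_Vv\|_{\mathcal L}+\|v-\pi_Vv\|_++|v-\pi_Vv|_{S_p}\le c_{a,\gamma}h^k|v|_{H^{k+1}(\Omega)}$ for all $v\in V\cap H^{k+1}(\Omega)$. The notation $A\lesssim B$ means $A\le CB$ with $C$ depending only on the mesh geometry and physical parameters, not on $h$. *)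

theory Defs
  imports "HOL-Analysis.Analysis"
begin

definition msum :: "'a::ab_group_add set \<Rightarrow> 'a set \<Rightarrow> 'a set" where
  "msum A B = {a + b | a b. a \<in> A \<and> b \<in> B}"

definition bilinear_on :: "'a::real_vector set \<Rightarrow> 'b::real_vector set \<Rightarrow> ('a \<Rightarrow> 'b \<Rightarrow> real) \<Rightarrow> bool" where
  "bilinear_on A B b \<longleftrightarrow>
     (\<forall>x\<in>A. \<forall>y\<in>A. \<forall>w\<in>B. \<forall>c::real.
        b (x + y) w = b x w + b y w \<and> b (c *\<^sub>R x) w = c * b x w) \<and>
     (\<forall>x\<in>A. \<forall>w\<in>B. \<forall>w'\<in>B. \<forall>c::real.
        b x (w + w') = b x w + b x w' \<and> b x (c *\<^sub>R w) = c * b x w)"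

definition sym_psd_on :: "'a::real_vector set \<Rightarrow> ('a \<Rightarrow> 'a \<Rightarrow> real) \<Rightarrow> bool" where
  "sym_psd_on A s \<longleftrightarrow> bilinear_on A A s \<and> (\<forall>x\<in>A. \<forall>y\<in>A. s x y = s y x) \<and> (\<forall>x\<in>A. 0 \<le> s x x)"

definition snorm :: "('a \<Rightarrow> 'a \<Rightarrow> real) \<Rightarrow> 'a \<Rightarrow> real" where
  "snorm s x = sqrt (s x x)"

definition seminorm_on :: "'a::real_vector set \<Rightarrow> ('a \<Rightarrow> real) \<Rightarrow> bool" where
  "seminorm_on A p \<longleftrightarrow> (\<forall>x\<in>A. 0 \<le> p x) \<and> (\<forall>x\<in>A. \<forall>c::real. p (c *\<^sub>R x) = \<bar>c\<bar> * p x)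
      \<and> (\<forall>x\<in>A. \<forall>y\<in>A. p (x + y) \<le> p x + p y)"

definition linear_on :: "'a::real_vector set \<Rightarrow> ('a \<Rightarrow> 'b::real_vector) \<Rightarrow> bool" where
  "linear_on A p \<longleftrightarrow> (\<forall>x\<in>A. \<forall>y\<in>A. \<forall>c d::real. p (c *\<^sub>R x + d *\<^sub>R y) = c *\<^sub>R p x + d *\<^sub>R p y)"

end

theory Submission
  imports Defs
begin

text \<open>Split the error as \<open>u - u\<^sub>h = \<eta> + e\<close> with the interpolation error \<open>\<eta> = u - \<pi>\<^sub>V u\<close> and
  the discrete error \<open>e = \<pi>\<^sub>V u - u\<^sub>h \<in> V\<^sub>h\<close>. Testing the two Galerkin orthogonalities (GO) with
  \<open>z\<^sub>h\<close> and \<open>e\<close> gives \<open>|e|\<^sup>2\<^sub>S\<^sub>p + |z\<^sub>h|\<^sup>2\<^sub>S\<^sub>a = a\<^sub>h(\<eta>, z\<^sub>h) - s\<^sub>p(\<eta>, e)\<close>. Bounding the first term by (C1),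
  the second by Cauchy-Schwarz, and all norms of \<open>\<eta>\<close> by (A1) leaves a quadratic inequality in
  \<open>|e|\<^sub>S\<^sub>p\<close> and \<open>|z\<^sub>h|\<^sub>S\<^sub>a\<close>, which gives the first estimate. If \<open>s\<^sub>p(u, \<cdot>)\<close> vanishes, then
  \<open>|u\<^sub>h|\<^sub>S\<^sub>p = |u - u\<^sub>h|\<^sub>S\<^sub>p \<le> |\<eta>|\<^sub>S\<^sub>p + |e|\<^sub>S\<^sub>p\<close>, which gives the second.\<close>

lemma subspace_msum:
  assumes A: "subspace A" and B: "subspace B"
  shows "subspace (msum A B)"
  unfolding subspace_def
proof (intro conjI ballI allI)
  show "0 \<in> msum A B"
    unfolding msum_def using subspace_0[OF A] subspace_0[OF B] by force
next
  fix x y assume "x \<in> msum A B" "y \<in> msum A B"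
  then obtain a b c d where "x = a + b" "y = c + d" "a \<in> A" "b \<in> B" "c \<in> A" "d \<in> B"
    unfolding msum_def by blast
  moreover have "x + y = (a + c) + (b + d)" using calculation by (simp add: algebra_simps)
  ultimately show "x + y \<in> msum A B"
    unfolding msum_def using subspace_add[OF A] subspace_add[OF B] by blast
next
  fix r :: real and x assume "x \<in> msum A B"
  then obtain a b where "x = a + b" "a \<in> A" "b \<in> B" unfolding msum_def by blast
  then show "r *\<^sub>R x \<in> msum A B"
    unfolding msum_def using subspace_scale[OF A] subspace_scale[OF B]
    by (metis (mono_tags, lifting) mem_Collect_eq scaleR_right_distrib)
qed

lemma mem_msum_left: "subspace B \<Longrightarrow> x \<in> A \<Longrightarrow> x \<in> msum A B"
  unfolding msum_def by (metis (mono_tags, lifting) add.right_neutral mem_Collect_eq subspace_0)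

lemma mem_msum_right: "subspace A \<Longrightarrow> x \<in> B \<Longrightarrow> x \<in> msum A B"
  unfolding msum_def by (metis (mono_tags, lifting) add_0 mem_Collect_eq subspace_0)

lemma linear_on_0: "linear_on A p \<Longrightarrow> 0 \<in> A \<Longrightarrow> p 0 = 0"
  unfolding linear_on_def by (metis scale_zero_left add_0)

lemma bilinear_on_add_left:
  "bilinear_on A B b \<Longrightarrow> x \<in> A \<Longrightarrow> y \<in> A \<Longrightarrow> w \<in> B \<Longrightarrow> b (x + y) w = b x w + b y w"
  unfolding bilinear_on_def by blast

lemma bilinear_on_scaleR_left:
  "bilinear_on A B b \<Longrightarrow> x \<in> A \<Longrightarrow> w \<in> B \<Longrightarrow> b (c *\<^sub>R x) w = c * b x w"
  unfolding bilinear_on_def by blast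

lemma bilinear_on_add_right:
  "bilinear_on A B b \<Longrightarrow> x \<in> A \<Longrightarrow> w \<in> B \<Longrightarrow> w' \<in> B \<Longrightarrow> b x (w + w') = b x w + b x w'"
  unfolding bilinear_on_def by blast

lemma bilinear_on_scaleR_right:
  "bilinear_on A B b \<Longrightarrow> x \<in> A \<Longrightarrow> w \<in> B \<Longrightarrow> b x (c *\<^sub>R w) = c * b x w"
  unfolding bilinear_on_def by blast

lemma bilinear_on_minus_right:
  "bilinear_on A B b \<Longrightarrow> x \<in> A \<Longrightarrow> w \<in> B \<Longrightarrow> b x (- w) = - b x w"
  using bilinear_on_scaleR_right[of A B b x w "-1"] by simp

lemma bilinear_on_diff_left:
  assumes "subspace A" "bilinear_on A B b" "x \<in> A" "y \<in> A" "w \<in> B"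
  shows "b (x - y) w = b x w - b y w"
  using assms bilinear_on_add_left[of A B b x "(-1) *\<^sub>R y" w] bilinear_on_scaleR_left[of A B b y w "-1"]
  by (simp add: subspace_neg)

lemma bilinear_on_diff_right:
  assumes "subspace B" "bilinear_on A B b" "x \<in> A" "w \<in> B" "w' \<in> B"
  shows "b x (w - w') = b x w - b x w'"
  using assms bilinear_on_add_right[of A B b x w "(-1) *\<^sub>R w'"] bilinear_on_scaleR_right[of A B b x w' "-1"]
  by (simp add: subspace_neg)

lemma sym_psd_on_cauchy_schwarz:
  assumes A: "subspace A" and s: "sym_psd_on A s" and x: "x \<in> A" and y: "y \<in> A"
  shows "(s x y)\<^sup>2 \<le> s x x * s y y"
proof -
  have bil: "bilinear_on A A s" and sym: "s y x = s x y" and psd: "\<And>v. v \<in> A \<Longrightarrow> 0 \<le> s v v"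
    using s x y unfolding sym_psd_on_def by auto
  have quad: "0 \<le> s x x + 2 * t * s x y + t\<^sup>2 * s y y" for t
  proof -
    have ty: "t *\<^sub>R y \<in> A" using A y by (simp add: subspace_scale)
    have "0 \<le> s (x + t *\<^sub>R y) (x + t *\<^sub>R y)" using A x ty by (simp add: psd subspace_add)
    also have "\<dots> = s x x + 2 * t * s x y + t\<^sup>2 * s y y"
      using A x y ty sym
      by (simp add: bilinear_on_add_left[OF bil] bilinear_on_add_right[OF bil] subspace_add
          bilinear_on_scaleR_left[OF bil] bilinear_on_scaleR_right[OF bil] power2_eq_square algebra_simps)
    finally show ?thesis .
  qed
  show ?thesis
  proof (cases "s y y = 0")
    case True
    have "s x y = 0"
    proof (rule ccontr)
      assume ne: "s x y \<noteq> 0"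
      from quad[of "- (s x x + 1) / (2 * s x y)"] True ne show False by (simp add: field_simps)
    qed
    with True show ?thesis by simp
  next
    case False
    then have pos: "0 < s y y" using psd[OF y] by simp
    have "0 \<le> s x x + 2 * (- s x y / s y y) * s x y + (- s x y / s y y)\<^sup>2 * s y y" by (rule quad)
    also have "\<dots> = s x x - (s x y)\<^sup>2 / s y y" using pos by (simp add: field_simps power2_eq_square)
    finally show ?thesis using pos by (simp add: field_simps)
  qed
qed

lemma snorm_nonneg: "sym_psd_on A s \<Longrightarrow> x \<in> A \<Longrightarrow> 0 \<le> snorm s x"
  unfolding sym_psd_on_def snorm_def by simp

lemma power2_snorm: "sym_psd_on A s \<Longrightarrow> x \<in> A \<Longrightarrow> (snorm s x)\<^sup>2 = s x x"
  unfolding sym_psd_on_def snorm_def by simp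

lemma abs_le_snorm_mult:
  assumes "subspace A" "sym_psd_on A s" "x \<in> A" "y \<in> A"
  shows "\<bar>s x y\<bar> \<le> snorm s x * snorm s y"
proof -
  have "\<bar>s x y\<bar> = sqrt ((s x y)\<^sup>2)" by simp
  also have "\<dots> \<le> sqrt (s x x * s y y)"
    using sym_psd_on_cauchy_schwarz[OF assms] by (rule real_sqrt_le_mono)
  finally show ?thesis by (simp add: snorm_def real_sqrt_mult)
qed

lemma snorm_add_le:
  assumes A: "subspace A" and s: "sym_psd_on A s" and x: "x \<in> A" and y: "y \<in> A"
  shows "snorm s (x + y) \<le> snorm s x + snorm s y"
proof -
  have bil: "bilinear_on A A s" and sym: "s y x = s x y" using s x y unfolding sym_psd_on_def by auto
  have "s (x + y) (x + y) = s x x + 2 * s x y + s y y"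
    using A x y sym by (simp add: bilinear_on_add_left[OF bil] bilinear_on_add_right[OF bil] subspace_add)
  also have "\<dots> \<le> (snorm s x)\<^sup>2 + 2 * (snorm s x * snorm s y) + (snorm s y)\<^sup>2"
    using abs_le_snorm_mult[OF A s x y] by (simp add: power2_snorm[OF s x] power2_snorm[OF s y])
  also have "\<dots> = (snorm s x + snorm s y)\<^sup>2" by (simp add: power2_eq_square algebra_simps)
  finally have "(snorm s (x + y))\<^sup>2 \<le> (snorm s x + snorm s y)\<^sup>2"
    using A x y by (simp add: power2_snorm[OF s] subspace_add)
  then show ?thesis
    by (rule power2_le_imp_le) (simp add: snorm_nonneg[OF s x] snorm_nonneg[OF s y])
qed

lemma snorm_minus:
  assumes "subspace A" "sym_psd_on A s" "x \<in> A"
  shows "snorm s (- x) = snorm s x"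
  using assms bilinear_on_scaleR_left[of A A s x "-x" "-1"] bilinear_on_minus_right[of A A s x x]
  unfolding sym_psd_on_def snorm_def by (simp add: subspace_neg)

lemma snorm_eq_snorm_diff_if_orthogonal:
  assumes A: "subspace A" and s: "sym_psd_on A s" and u: "u \<in> A" and x: "x \<in> A"
    and "s u x = 0" and "s u (u - x) = 0"
  shows "snorm s x = snorm s (u - x)"
proof -
  have bil: "bilinear_on A A s" and sym: "s x u = s u x" using s u x unfolding sym_psd_on_def by auto
  have "s (u - x) (u - x) = s u (u - x) - s x (u - x)"
    using A u x by (simp add: bilinear_on_diff_left[OF A bil] subspace_diff)
  also have "\<dots> = s x x"
    using assms sym by (simp add: bilinear_on_diff_right[OF A bil])
  finally show ?thesis unfolding snorm_def by simp
qed

lemma sum_le_of_energy_inequality: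
  fixes x y A B M c d :: real
  assumes "0 \<le> x" "0 \<le> y" "0 \<le> A" "0 \<le> B" "0 \<le> c" "0 \<le> d" and AB: "A + B \<le> M"
    and energy: "x\<^sup>2 + y\<^sup>2 \<le> A * (c * y + d) + B * x"
  shows "x + y \<le> 2 * (M * sqrt (1 + c\<^sup>2) + d)"
proof -
  define K where "K = M * sqrt (1 + c\<^sup>2)"
  have M: "0 \<le> M" "A \<le> M" "B \<le> M" using assms by linarith+
  have K: "0 \<le> K" "K\<^sup>2 = (1 + c\<^sup>2) * M\<^sup>2"
    using M by (simp_all add: K_def power_mult_distrib)
  have "A\<^sup>2 \<le> M\<^sup>2" "B\<^sup>2 \<le> M\<^sup>2" using M assms by (simp_all add: power_mono)
  moreover have "2 * (A * c * y) \<le> (c * A)\<^sup>2 + y\<^sup>2" "2 * (B * x) \<le> B\<^sup>2 + x\<^sup>2" "2 * (M * d) \<le> M\<^sup>2 + d\<^sup>2"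
    using sum_squares_bound[of "c * A" y] sum_squares_bound[of B x] sum_squares_bound[of M d]
    by (simp_all add: algebra_simps)
  moreover have "A * d \<le> M * d" using M assms by (simp add: mult_right_mono)
  moreover have "c\<^sup>2 * A\<^sup>2 \<le> c\<^sup>2 * M\<^sup>2" using calculation by (simp add: mult_left_mono)
  ultimately have "x\<^sup>2 + y\<^sup>2 \<le> (2 + c\<^sup>2) * M\<^sup>2 + d\<^sup>2"
    using energy by (simp add: power_mult_distrib algebra_simps)
  moreover have "(x + y)\<^sup>2 \<le> 2 * (x\<^sup>2 + y\<^sup>2)"
    using sum_squares_bound[of x y] by (simp add: power2_sum)
  ultimately have "(x + y)\<^sup>2 \<le> 4 * K\<^sup>2 + 4 * d\<^sup>2"
    unfolding K(2) using zero_le_power2[of d] zero_le_power2[of "c * M"]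
    by (smt (verit) distrib_right power_mult_distrib)
  also have "\<dots> \<le> (2 * (K + d))\<^sup>2"
    using K \<open>0 \<le> d\<close> by (simp add: power2_sum power_mult_distrib)
  finally have "(x + y)\<^sup>2 \<le> (2 * (K + d))\<^sup>2" .
  then show ?thesis
    unfolding K_def[symmetric] by (rule power2_le_imp_le) (simp add: K assms)
qed

lemma stabilized_error_identity:
  assumes ah: "bilinear_on MV MW ah" and sp: "bilinear_on MV MV sp"
    and "eta \<in> MV" "e \<in> MV" "zh \<in> MW"
    and GO_forward: "ah (eta + e) zh = sa zh zh" and GO_adjoint: "ah e (- zh) = sp (eta + e) e"
  shows "sp e e + sa zh zh = ah eta zh - sp eta e"
proof -
  have "ah eta zh + ah e zh = sa zh zh"
    using GO_forward assms(3-5) by (simp add: bilinear_on_add_left[OF ah])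
  moreover have "- ah e zh = sp eta e + sp e e"
    using GO_adjoint assms(3-5) by (simp add: bilinear_on_minus_right[OF ah] bilinear_on_add_left[OF sp])
  ultimately show ?thesis by linarith
qed

lemma stabilized_error_estimate:
  assumes MV: "subspace MV" and ah: "bilinear_on MV MW ah"
    and sp: "sym_psd_on MV sp" and sa: "sym_psd_on MW sa"
    and eta: "eta \<in> MV" and e: "e \<in> MV" and zh: "zh \<in> MW"
    and "ah (eta + e) zh = sa zh zh" "ah e (- zh) = sp (eta + e) e"
    and consistency: "ah eta zh \<le> A * (c * snorm sa zh + d)"
    and "0 \<le> A" "0 \<le> c" "0 \<le> d" and approx: "A + snorm sp eta \<le> M"
  shows "snorm sp e + snorm sa zh \<le> 2 * (M * sqrt (1 + c\<^sup>2) + d)"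
proof (rule sum_le_of_energy_inequality)
  have "sp e e + sa zh zh = ah eta zh - sp eta e"
    using sp unfolding sym_psd_on_def by (intro stabilized_error_identity[OF ah _ eta e zh]) (use assms in auto)
  also have "\<dots> \<le> A * (c * snorm sa zh + d) + snorm sp eta * snorm sp e"
    using consistency abs_le_snorm_mult[OF MV sp eta e] by linarith
  finally show "(snorm sp e)\<^sup>2 + (snorm sa zh)\<^sup>2 \<le> A * (c * snorm sa zh + d) + snorm sp eta * snorm sp e"
    by (simp add: power2_snorm[OF sp e] power2_snorm[OF sa zh])
qed (use assms snorm_nonneg[OF sp eta] snorm_nonneg[OF sp e] snorm_nonneg[OF sa zh] in auto)

text \<open>The assumptions below are literally conjuncts of the hypothesis of the main theorem, so the
  exported lemmas apply to it by assumption.\<close>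

context
  fixes V W Vh Wh H2 Hk1 :: "'f::real_inner set" and semHk1 nplus nL :: "'f \<Rightarrow> real"
    and ah sp sa :: "'f \<Rightarrow> 'f \<Rightarrow> real" and u uh zh :: 'f and piV piW :: "'f \<Rightarrow> 'f"
    and ca cag eps h :: real and k :: nat
  assumes V: "subspace V" and W: "subspace W" and Vh: "subspace Vh" and Wh: "subspace Wh"
    and Hk1_H2: "Hk1 \<subseteq> H2" and u_V: "u \<in> V" and u_Hk1: "u \<in> Hk1"
    and ah: "bilinear_on (msum V Vh) (msum W Wh) ah"
    and sp: "sym_psd_on (msum V Vh) sp" and sa: "sym_psd_on (msum W Wh) sa"
    and uh: "uh \<in> Vh" and zh: "zh \<in> Wh"
    and GO_forward: "\<forall>wh\<in>Wh. ah (u - uh) wh = sa zh wh"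
    and GO_adjoint: "\<forall>vh\<in>Vh. ah vh (0 - zh) = sp (u - uh) vh"
    and piV: "piV ` V \<subseteq> Vh" and piW: "linear_on W piW"
    and nplus: "seminorm_on (msum V Vh) nplus" and nL: "seminorm_on (msum V Vh) nL"
    and ca: "0 < ca" and eps: "0 \<le> eps"
    and C1: "\<forall>v\<in>V \<inter> H2. \<forall>xh\<in>Wh.
        ah (v - piV v) xh \<le> nplus (v - piV v) * (ca * snorm sa xh + eps * norm xh)"
    and A1: "\<forall>v\<in>V \<inter> Hk1.
        nL (v - piV v) + nplus (v - piV v) + snorm sp (v - piV v) \<le> cag * h ^ k * semHk1 v"
begin

lemma msum_memberships:
  "u \<in> msum V Vh" "uh \<in> msum V Vh" "piV u \<in> msum V Vh" "zh \<in> msum W Wh"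
  using u_V uh zh piV by (auto intro: mem_msum_left[OF Vh] mem_msum_right[OF V] mem_msum_right[OF W])

lemma interpolation_error_bound:
  "nplus (u - piV u) + snorm sp (u - piV u) \<le> cag * h ^ k * semHk1 u"
proof -
  have "u - piV u \<in> msum V Vh" using msum_memberships subspace_msum[OF V Vh] by (simp add: subspace_diff)
  then have "0 \<le> nL (u - piV u)" using nL unfolding seminorm_on_def by blast
  moreover have "nL (u - piV u) + nplus (u - piV u) + snorm sp (u - piV u) \<le> cag * h ^ k * semHk1 u"
    using A1 u_V u_Hk1 by blast
  ultimately show ?thesis by linarith
qed

lemma discrete_error_snorm_bound:
  "snorm sp (piV u - uh) + snorm sa zh \<le> 2 * (cag * h ^ k * semHk1 u * sqrt (1 + ca\<^sup>2) + eps * norm zh)"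
proof (rule stabilized_error_estimate[OF subspace_msum[OF V Vh] ah sp sa])
  show "u - piV u \<in> msum V Vh" "piV u - uh \<in> msum V Vh"
    using msum_memberships subspace_msum[OF V Vh] by (simp_all add: subspace_diff)
  show "ah (u - piV u + (piV u - uh)) zh = sa zh zh" using GO_forward zh by simp
  show "ah (piV u - uh) (- zh) = sp (u - piV u + (piV u - uh)) (piV u - uh)"
    using GO_adjoint piV u_V uh Vh by (simp add: image_subset_iff subspace_diff)
  show "ah (u - piV u) zh \<le> nplus (u - piV u) * (ca * snorm sa zh + eps * norm zh)"
    using C1 u_V u_Hk1 Hk1_H2 zh by blast
  show "0 \<le> nplus (u - piV u)"
    using nplus \<open>u - piV u \<in> msum V Vh\<close> unfolding seminorm_on_def by blast
qed (use msum_memberships interpolation_error_bound ca eps in auto)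

lemma projection_error_snorm_bound:
  "snorm sp (piV u - uh) + snorm sa (piW 0 - zh)
    \<le> 2 * (cag * sqrt (1 + ca\<^sup>2) * h ^ k * semHk1 u + eps * norm zh)"
proof -
  have "piW 0 = 0" using linear_on_0[OF piW] subspace_0[OF W] .
  then have "snorm sa (piW 0 - zh) = snorm sa zh"
    using snorm_minus[OF subspace_msum[OF W Wh] sa] msum_memberships by simp
  then show ?thesis using discrete_error_snorm_bound by (simp add: mult_ac)
qed

lemma discrete_solution_snorm_bound:
  assumes orth: "\<forall>v\<in>V. \<forall>vh\<in>Vh. sp u (v + vh) = 0"
  shows "snorm sp uh + snorm sa zh
    \<le> 2 * ((cag + cag * sqrt (1 + ca\<^sup>2)) * h ^ k * semHk1 u + eps * norm zh)"
proof -
  have MV: "subspace (msum V Vh)" by (rule subspace_msum[OF V Vh])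
  have "sp u uh = 0" using orth[rule_format, of 0 uh] subspace_0[OF V] uh by simp
  moreover have "sp u (u - uh) = 0"
    using orth[rule_format, of u "- uh"] u_V uh Vh by (simp add: subspace_neg)
  ultimately have "snorm sp uh = snorm sp ((u - piV u) + (piV u - uh))"
    using snorm_eq_snorm_diff_if_orthogonal[OF MV sp] msum_memberships by simp
  also have "\<dots> \<le> snorm sp (u - piV u) + snorm sp (piV u - uh)"
    using msum_memberships MV by (intro snorm_add_le[OF MV sp]) (simp_all add: subspace_diff)
  moreover have "0 \<le> nplus (u - piV u)" "0 \<le> snorm sp (u - piV u)"
    using nplus snorm_nonneg[OF sp] msum_memberships MV unfolding seminorm_on_def
    by (simp_all add: subspace_diff)
  ultimately show ?thesis
    using discrete_error_snorm_bound interpolation_error_bound by (simp add: algebra_simps)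
qed

end

theorem mainTheorem1:
  shows "\<exists>C>0. \<forall>(V::'f::real_inner set) W Vh Wh H2 Hk1 (semHk1::'f \<Rightarrow> real)
     (a::'f \<Rightarrow> 'f \<Rightarrow> real) ah sp sa (f::'f) u uh zh (piV::'f \<Rightarrow> 'f) piW
     (nplus::'f \<Rightarrow> real) nL (ca::real) cag eps (h::real) (k::nat).
   ( subspace V \<and> subspace W \<and> subspace Vh \<and> subspace Wh
   \<and> subspace H2 \<and> subspace Hk1 \<and> Hk1 \<subseteq> H2 \<and> seminorm_on Hk1 semHk1
   \<and> 0 < h \<and> 1 \<le> k
   \<comment> \<open>forward problem: u \<in> V \<inter> H^{k+1}, a(u,w) = (f,w) for all w \<in> W\<close>
   \<and> bilinear_on V W a \<and> u \<in> V \<and> u \<in> Hk1 \<and> (\<forall>w\<in>W. a u w = inner f w)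
   \<comment> \<open>discrete forms\<close>
   \<and> bilinear_on (msum V Vh) (msum W Wh) ah
   \<and> sym_psd_on (msum V Vh) sp \<and> sym_psd_on (msum W Wh) sa
   \<comment> \<open>discrete problem\<close>
   \<and> uh \<in> Vh \<and> zh \<in> Wh
   \<and> (\<forall>vh\<in>Vh. \<forall>wh\<in>Wh. ah uh wh + sa zh wh = inner f wh
                       \<and> ah vh zh - sp uh vh = - sp u vh)
   \<comment> \<open>(GO), with z = 0\<close>
   \<and> (\<forall>wh\<in>Wh. ah (u - uh) wh = sa zh wh)
   \<and> (\<forall>vh\<in>Vh. ah vh (0 - zh) = sp (u - uh) vh)
   \<comment> \<open>operators and semi-norms\<close>
   \<and> piV ` V \<subseteq> Vh \<and> piW ` W \<subseteq> Wh \<and> linear_on V piV \<and> linear_on W piW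
   \<and> seminorm_on (msum V Vh) nplus \<and> seminorm_on (msum V Vh) nL
   \<and> 0 < ca \<and> 0 < cag \<and> 0 \<le> eps
   \<comment> \<open>(C1)\<close>
   \<and> (\<forall>v\<in>V \<inter> H2. \<forall>xh\<in>Wh.
        ah (v - piV v) xh \<le> nplus (v - piV v) * (ca * snorm sa xh + eps * norm xh))
   \<comment> \<open>(A1)\<close>
   \<and> (\<forall>v\<in>V \<inter> Hk1.
        nL (v - piV v) + nplus (v - piV v) + snorm sp (v - piV v) \<le> cag * h ^ k * semHk1 v) )
   \<longrightarrow>
   ( snorm sp (piV u - uh) + snorm sa (piW 0 - zh)
        \<le> C * (cag * sqrt (1 + ca\<^sup>2) * h ^ k * semHk1 u + eps * norm zh)
   \<and> ((\<forall>v\<in>V. \<forall>vh\<in>Vh. sp u (v + vh) = 0) \<longrightarrow>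
        snorm sp uh + snorm sa zh
          \<le> C * ((cag + cag * sqrt (1 + ca\<^sup>2)) * h ^ k * semHk1 u + eps * norm zh)) )"
  apply (intro exI[of _ 2] conjI allI impI; (elim conjE)?)
    apply simp
   apply (rule projection_error_snorm_bound; assumption)
  apply (rule discrete_solution_snorm_bound; assumption)
  done

end
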